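(* For every sufficiently small fixed $\varepsilon>0$ and $p=n^{-(2/5+\varepsilon)}$, asymptotically almost surely $G\sim\mathbb{G}(n,p)$ does not contain pairwise edge-disjoint $K_4$-tiled subgraphs $H_1,\dots,H_k$ with $k\ge 2$ and $|V(H_i)\cap V(H_{i+1})|=1$ for every $i\in[k-1]$, such that $\phi(H_1)\ge 6$, $\phi(H_k)\ge 6$, and $\phi(H_i)\ge 3$ for every $2\le i\le k-1$, where $\phi(H)=8-5v(H)+2e(H)$.
   Context: A graph is $K_4$-tiled if every edge lies in a copy of $K_4$ and the auxiliary graph whose vertices are the copies of $K_4$ (two adjacent iff they share an edge) is connected. *)

theory Defs
  imports Complex_Main
begin

text \<open>Graphs on vertex set {0..<n} are represented by their edge sets: sets of
2-element subsets of {0..<n}.\<close>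

definition all_edges :: "nat \<Rightarrow> nat set set" where
  "all_edges n = {e. \<exists>u v. u < n \<and> v < n \<and> u \<noteq> v \<and> e = {u, v}}"

definition gnp_prob :: "nat \<Rightarrow> real \<Rightarrow> (nat set set \<Rightarrow> bool) \<Rightarrow> real" where
  "gnp_prob n p P =
     (\<Sum>E\<in>Pow (all_edges n).
        if P E then p ^ card E * (1 - p) ^ (card (all_edges n) - card E) else 0)"

definition verts :: "nat set set \<Rightarrow> nat set" where
  "verts H = \<Union> H"

definition K4_copies :: "nat set set \<Rightarrow> nat set set" where
  "K4_copies H = {S. card S = 4 \<and> (\<forall>u\<in>S. \<forall>v\<in>S. u \<noteq> v \<longrightarrow> {u, v} \<in> H)}"

definition K4_aux :: "nat set set \<Rightarrow> (nat set \<times> nat set) set" where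
  "K4_aux H = {(S, T). S \<in> K4_copies H \<and> T \<in> K4_copies H \<and>
                       (\<exists>e\<in>H. e \<subseteq> S \<and> e \<subseteq> T)}"

definition K4_tiled :: "nat set set \<Rightarrow> bool" where
  "K4_tiled H \<longleftrightarrow>
     K4_copies H \<noteq> {} \<and>
     (\<forall>e\<in>H. \<exists>S\<in>K4_copies H. e \<subseteq> S) \<and>
     (\<forall>S\<in>K4_copies H. \<forall>T\<in>K4_copies H. (S, T) \<in> (K4_aux H)\<^sup>*)"

definition phi :: "nat set set \<Rightarrow> int" where
  "phi H = 8 - 5 * int (card (verts H)) + 2 * int (card H)"

definition bad_chain :: "nat set set \<Rightarrow> bool" where
  "bad_chain E \<longleftrightarrow>
     (\<exists>k::nat. \<exists>Hs :: nat \<Rightarrow> nat set set. k \<ge> 2 \<and>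
        (\<forall>i\<in>{1..k}. Hs i \<subseteq> E \<and> K4_tiled (Hs i)) \<and>
        (\<forall>i\<in>{1..k}. \<forall>j\<in>{1..k}. i \<noteq> j \<longrightarrow> Hs i \<inter> Hs j = {}) \<and>
        (\<forall>i\<in>{1..k-1}. card (verts (Hs i) \<inter> verts (Hs (Suc i))) = 1) \<and>
        phi (Hs 1) \<ge> 6 \<and> phi (Hs k) \<ge> 6 \<and>
        (\<forall>i\<in>{2..k-1}. phi (Hs i) \<ge> 3))"

end

theory Submission
  imports Defs
begin

text \<open>A bad chain always contains a subgraph F on a bounded number of vertices that is too dense
  to appear in G(n,p): with p = n^-(2/5 + \<epsilon>) its expected number of copies is at most
  n^(v(F)) p^(e(F)) \<le> n^-1/5, which amounts to 9 \<le> phi F + 5 \<epsilon> e(F).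
  If some piece H_i has at least T \<approx> 2/\<epsilon> edges, grow a subgraph of H_i one copy of K4 at a
  time along shared edges: a new copy brings j \<le> 2 new vertices and at least 5j/2 new edges, so
  phi stays nonnegative, and we stop at about T edges. Otherwise every piece is small; gluing two
  edge-disjoint graphs at a vertex loses at most 3 in phi, so the first J \<approx> 1/\<epsilon> pieces have
  phi \<ge> 6, and a chain with at most J pieces has phi \<ge> 9. The first moment method over these
  boundedly many isomorphism types then gives probability O(n^-1/5).\<close>

lemma finite_all_edges: "finite (all_edges n)"
proof (rule finite_subset)
  show "all_edges n \<subseteq> Pow {0..<n}" unfolding all_edges_def by auto
qed simp

lemma card_edge: "e \<in> all_edges n \<Longrightarrow> card e = 2"
  unfolding all_edges_def by auto

lemma verts_subset_atLeastLessThan: "F \<subseteq> all_edges n \<Longrightarrow> verts F \<subseteq> {0..<n}"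
  unfolding verts_def all_edges_def by auto

lemma finite_verts: "F \<subseteq> all_edges n \<Longrightarrow> finite (verts F)"
  using finite_subset[OF verts_subset_atLeastLessThan] by blast

lemma finite_edges_if_finite_verts: "finite (verts F) \<Longrightarrow> finite F"
  unfolding verts_def by (rule finite_UnionD)

lemma edge_subset_verts: "e \<in> F \<Longrightarrow> e \<subseteq> verts F"
  unfolding verts_def by blast

lemma verts_mono: "A \<subseteq> B \<Longrightarrow> verts A \<subseteq> verts B"
  unfolding verts_def by blast

lemma verts_Un: "verts (A \<union> B) = verts A \<union> verts B"
  unfolding verts_def by simp

lemma card_verts_le:
  assumes "F \<subseteq> all_edges n" shows "card (verts F) \<le> 2 * card F"
proof -
  have "card (verts F) \<le> sum card F" unfolding verts_def by (rule card_Union_le_sum_card)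
  also have "\<dots> = sum (\<lambda>_. 2) F" using assms by (intro sum.cong) (auto simp: card_edge)
  finally show ?thesis by simp
qed

definition clique_edges :: "nat set \<Rightarrow> nat set set" where
  "clique_edges S = {e. e \<subseteq> S \<and> card e = 2}"

lemma clique_edges_mono: "S \<subseteq> S' \<Longrightarrow> clique_edges S \<subseteq> clique_edges S'"
  unfolding clique_edges_def by auto

lemma card_clique_edges: "finite S \<Longrightarrow> card (clique_edges S) = card S choose 2"
  unfolding clique_edges_def by (rule n_subsets)

lemma verts_clique_edges:
  assumes "2 \<le> card S" shows "verts (clique_edges S) = S"
proof
  show "verts (clique_edges S) \<subseteq> S" unfolding verts_def clique_edges_def by auto
  show "S \<subseteq> verts (clique_edges S)"
  proof
    fix x assume x: "x \<in> S"
    have "finite S" using assms by (metis card.infinite not_numeral_le_zero)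
    then have "1 \<le> card (S - {x})" using assms x by simp
    then obtain y where "y \<in> S - {x}" by (metis all_not_in_conv card.empty not_one_le_zero)
    then have "{x, y} \<in> clique_edges S" using x unfolding clique_edges_def by auto
    then show "x \<in> verts (clique_edges S)" unfolding verts_def by blast
  qed
qed

lemma card_clique_edges_K4:
  assumes "card S = 4" shows "card (clique_edges S) = 6"
proof -
  have "finite S" using assms by (metis card.infinite zero_neq_numeral)
  then show ?thesis using assms by (simp add: card_clique_edges numeral_eq_Suc)
qed

lemma clique_edges_subset_if_K4_copy: "S \<in> K4_copies H \<Longrightarrow> clique_edges S \<subseteq> H"
  unfolding clique_edges_def K4_copies_def by (auto simp: card_2_iff)

lemma phi_clique_edges_K4: "card S = 4 \<Longrightarrow> phi (clique_edges S) = 0"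
  by (simp add: phi_def verts_clique_edges card_clique_edges_K4)

lemma phi_le_phi_Un_clique_edges:
  assumes finV: "finite (verts F)" and Y: "card Y = 4" and shared: "2 \<le> card (Y \<inter> verts F)"
  shows "phi F \<le> phi (F \<union> clique_edges Y)"
proof -
  let ?m = "card (Y \<inter> verts F)"
  let ?new = "clique_edges Y - clique_edges (Y \<inter> verts F)"
  have finY: "finite Y" using Y by (metis card.infinite zero_neq_numeral)
  have m4: "?m \<le> 4" using Y finY by (metis card_mono inf_le1)
  have "card (verts F \<union> Y) + ?m = card (verts F) + 4"
    using card_Un_Int[OF finV finY] Y by (simp add: Int_commute)
  then have verts_new: "card (verts (F \<union> clique_edges Y)) + ?m = card (verts F) + 4"
    using Y by (simp add: verts_Un verts_clique_edges)
  have "card (clique_edges Y) = 6" using Y by (rule card_clique_edges_K4)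
  moreover have "card (clique_edges (Y \<inter> verts F)) = ?m choose 2"
    using finY by (simp add: card_clique_edges)
  ultimately have "card ?new = 6 - (?m choose 2)"
    using finY by (subst card_Diff_subset) (auto simp: clique_edges_mono clique_edges_def)
  \<comment> \<open>an edge of F inside Y has both ends in verts F, so the edges of Y leaving verts F are new\<close>
  moreover have "F \<inter> ?new = {}" using edge_subset_verts unfolding clique_edges_def by blast
  then have "card F + card ?new \<le> card (F \<union> clique_edges Y)"
    using finite_edges_if_finite_verts[OF finV] finY
    by (subst card_Un_disjoint[symmetric]) (auto intro!: card_mono simp: clique_edges_def)
  moreover have "5 * (4 - ?m) \<le> 2 * (6 - (?m choose 2))"
    using shared m4 by (auto simp: le_Suc_eq numeral_eq_Suc)
  ultimately show ?thesis using verts_new m4 unfolding phi_def by linarith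
qed

section \<open>Growing subgraphs of K4-tiled graphs\<close>

lemma card_K4_tiled_ge:
  assumes "H \<subseteq> all_edges n" "K4_tiled H" shows "6 \<le> card H"
proof -
  obtain S where S: "S \<in> K4_copies H" using assms(2) unfolding K4_tiled_def by blast
  then have "card (clique_edges S) \<le> card H"
    using assms(1) finite_all_edges finite_subset
    by (metis card_mono clique_edges_subset_if_K4_copy)
  then show ?thesis using S card_clique_edges_K4 unfolding K4_copies_def by fastforce
qed

lemma K4_tiled_adjacent_copy_leaving:
  assumes H: "H \<subseteq> all_edges n" and tiled: "K4_tiled H" and F: "F \<subseteq> H" "F \<noteq> H"
    and T: "T \<in> K4_copies H" "clique_edges T \<subseteq> F"
  obtains X Y where "(X, Y) \<in> K4_aux H" "clique_edges X \<subseteq> F" "\<not> clique_edges Y \<subseteq> F"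
proof -
  obtain h where h: "h \<in> H" "h \<notin> F" using F by blast
  obtain S where S: "S \<in> K4_copies H" "h \<subseteq> S" using tiled h(1) unfolding K4_tiled_def by blast
  have "h \<in> clique_edges S" using S h H card_edge unfolding clique_edges_def by blast
  then have "\<not> clique_edges S \<subseteq> F" using h by blast
  moreover have "(T, S) \<in> (K4_aux H)\<^sup>*" using tiled T S unfolding K4_tiled_def by blast
  then have "clique_edges T \<subseteq> F \<longrightarrow> \<not> clique_edges S \<subseteq> F \<longrightarrow>
      (\<exists>X Y. (X, Y) \<in> K4_aux H \<and> clique_edges X \<subseteq> F \<and> \<not> clique_edges Y \<subseteq> F)"
    by (induction rule: rtrancl_induct) auto
  ultimately show thesis using T(2) that by blast
qed

lemma K4_tiled_grow_step:
  assumes H: "H \<subseteq> all_edges n" and tiled: "K4_tiled H" and F: "F \<subseteq> H" "F \<noteq> H"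
    and T: "T \<in> K4_copies H" "clique_edges T \<subseteq> F" and phi: "0 \<le> phi F"
  obtains F' where "F \<subset> F'" "F' \<subseteq> H" "card F' \<le> card F + 6" "0 \<le> phi F'"
proof -
  obtain X Y where XY: "(X, Y) \<in> K4_aux H" "clique_edges X \<subseteq> F" "\<not> clique_edges Y \<subseteq> F"
    using K4_tiled_adjacent_copy_leaving[OF H tiled F T] .
  then obtain e where e: "e \<in> H" "e \<subseteq> X" "e \<subseteq> Y" and Y: "Y \<in> K4_copies H"
    unfolding K4_aux_def by blast
  have "card e = 2" using e(1) H card_edge by blast
  then have "e \<in> F" using e(2) XY(2) unfolding clique_edges_def by blast
  then have "e \<subseteq> Y \<inter> verts F" using e(3) edge_subset_verts by blast
  then have shared: "2 \<le> card (Y \<inter> verts F)"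
    using \<open>card e = 2\<close> finite_verts F H by (metis card_mono finite_Int order_trans)
  have cardY: "card Y = 4" using Y unfolding K4_copies_def by simp
  show thesis
  proof (rule that[of "F \<union> clique_edges Y"])
    show "F \<subset> F \<union> clique_edges Y" using XY(3) by blast
    show "F \<union> clique_edges Y \<subseteq> H" using F clique_edges_subset_if_K4_copy[OF Y] by blast
    show "card (F \<union> clique_edges Y) \<le> card F + 6"
      using card_Un_le[of F "clique_edges Y"] card_clique_edges_K4[OF cardY] by simp
    show "0 \<le> phi (F \<union> clique_edges Y)"
      using phi phi_le_phi_Un_clique_edges[OF finite_verts[OF order_trans[OF F(1) H]] cardY shared]
      by simp
  qed
qed

lemma K4_tiled_phi_nonneg_subgraph:
  assumes H: "H \<subseteq> all_edges n" and tiled: "K4_tiled H"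
  obtains F where "F \<subseteq> H" "0 \<le> phi F" "min m (card H) \<le> card F" "card F \<le> m + 6"
proof -
  have finH: "finite H" using H finite_all_edges finite_subset by blast
  have "\<exists>F\<subseteq>H. (\<exists>T\<in>K4_copies H. clique_edges T \<subseteq> F) \<and> 0 \<le> phi F
          \<and> min m (card H) \<le> card F \<and> card F \<le> m + 6"
  proof (induction m)
    case 0
    obtain T where T: "T \<in> K4_copies H" using tiled unfolding K4_tiled_def by blast
    then have "card T = 4" unfolding K4_copies_def by simp
    then show ?case using T clique_edges_subset_if_K4_copy[OF T]
      by (intro exI[of _ "clique_edges T"]) (auto simp: card_clique_edges_K4 phi_clique_edges_K4)
  next
    case (Suc m)
    then obtain F T where F: "F \<subseteq> H" "0 \<le> phi F" "min m (card H) \<le> card F" "card F \<le> m + 6"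
      and T: "T \<in> K4_copies H" "clique_edges T \<subseteq> F" by blast
    show ?case
    proof (cases "min (Suc m) (card H) \<le> card F")
      case True
      then show ?thesis using F T by (intro exI[of _ F]) auto
    next
      case False
      then have "card F = m" "F \<noteq> H" using F(3) by auto
      obtain F' where F': "F \<subset> F'" "F' \<subseteq> H" "card F' \<le> card F + 6" "0 \<le> phi F'"
        using K4_tiled_grow_step[OF H tiled F(1) \<open>F \<noteq> H\<close> T F(2)] .
      have "card F < card F'" using F' finH by (meson psubset_card_mono finite_subset)
      then show ?thesis using F' T \<open>card F = m\<close> by (intro exI[of _ F']) auto
    qed
  qed
  then show thesis using that by blast
qed

section \<open>Chains of graphs glued at vertices\<close>

lemma phi_Un_ge:
  assumes "finite (verts A)" "finite (verts B)" "A \<inter> B = {}" "verts A \<inter> verts B \<noteq> {}"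
  shows "phi A + phi B - 3 \<le> phi (A \<union> B)"
proof -
  have "1 \<le> card (verts A \<inter> verts B)" using assms by (simp add: Suc_le_eq card_gt_0_iff)
  then have "card (verts (A \<union> B)) + 1 \<le> card (verts A) + card (verts B)"
    using card_Un_Int[OF assms(1,2)] by (simp add: verts_Un)
  moreover have "card (A \<union> B) = card A + card B"
    using assms finite_edges_if_finite_verts by (simp add: card_Un_disjoint)
  ultimately show ?thesis unfolding phi_def by linarith
qed

locale linked_chain =
  fixes n k :: nat and Hs :: "nat \<Rightarrow> nat set set"
  assumes graphs: "\<And>i. i \<in> {1..k} \<Longrightarrow> Hs i \<subseteq> all_edges n"
    and edge_disjoint: "\<And>i j. i \<in> {1..k} \<Longrightarrow> j \<in> {1..k} \<Longrightarrow> i \<noteq> j \<Longrightarrow> Hs i \<inter> Hs j = {}"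
    and linked: "\<And>i. i \<in> {1..k-1} \<Longrightarrow> verts (Hs i) \<inter> verts (Hs (Suc i)) \<noteq> {}"
begin

abbreviation prefix :: "nat \<Rightarrow> nat set set" where
  "prefix j \<equiv> \<Union>i\<in>{1..j}. Hs i"

lemma prefix_subset:
  assumes "\<And>i. i \<in> {1..k} \<Longrightarrow> Hs i \<subseteq> E" "j \<le> k" shows "prefix j \<subseteq> E"
proof
  fix e assume "e \<in> prefix j"
  then obtain i where i: "i \<in> {1..j}" "e \<in> Hs i" by blast
  then have "i \<in> {1..k}" using assms(2) by simp
  then show "e \<in> E" using assms(1) i(2) by blast
qed

lemma card_prefix:
  assumes "j \<le> k" shows "card (prefix j) = (\<Sum>i=1..j. card (Hs i))"
proof (rule card_UN_disjoint)
  show "\<forall>i\<in>{1..j}. finite (Hs i)"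
    using assms finite_all_edges by (auto intro!: finite_subset[OF graphs])
  show "\<forall>i\<in>{1..j}. \<forall>i'\<in>{1..j}. i \<noteq> i' \<longrightarrow> Hs i \<inter> Hs i' = {}"
    using assms edge_disjoint by simp
qed simp

lemma card_prefix_bounds:
  assumes "\<And>i. i \<in> {1..k} \<Longrightarrow> a \<le> card (Hs i) \<and> card (Hs i) \<le> b" "j \<le> k"
  shows "j * a \<le> card (prefix j) \<and> card (prefix j) \<le> j * b"
proof -
  have "card {1..j} * a \<le> (\<Sum>i=1..j. card (Hs i))"
    using sum_bounded_below[of "{1..j}" a "\<lambda>i. card (Hs i)"] assms by simp
  moreover have "(\<Sum>i=1..j. card (Hs i)) \<le> card {1..j} * b"
    using sum_bounded_above[of "{1..j}" "\<lambda>i. card (Hs i)" b] assms by simp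
  ultimately show ?thesis using card_prefix[OF assms(2)] by simp
qed

lemma phi_prefix_Suc:
  assumes "1 \<le> j" "j < k"
  shows "phi (prefix j) + phi (Hs (Suc j)) - 3 \<le> phi (prefix (Suc j))"
proof -
  have "Hs j \<subseteq> prefix j" by (rule UN_upper) (use assms in simp)
  then have "verts (Hs j) \<subseteq> verts (prefix j)" by (rule verts_mono)
  moreover have "verts (Hs j) \<inter> verts (Hs (Suc j)) \<noteq> {}" using linked assms by simp
  ultimately have "verts (prefix j) \<inter> verts (Hs (Suc j)) \<noteq> {}" by blast
  moreover have "Hs i \<inter> Hs (Suc j) = {}" if "i \<in> {1..j}" for i
    using that assms by (intro edge_disjoint) auto
  then have "prefix j \<inter> Hs (Suc j) = {}" by blast
  moreover have "finite (verts (prefix j))" "finite (verts (Hs (Suc j)))"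
    using assms finite_verts[OF prefix_subset[OF graphs]] finite_verts[OF graphs] by simp_all
  ultimately have "phi (prefix j) + phi (Hs (Suc j)) - 3 \<le> phi (prefix j \<union> Hs (Suc j))"
    by (intro phi_Un_ge)
  moreover have "prefix (Suc j) = prefix j \<union> Hs (Suc j)" by (auto simp: atLeastAtMostSuc_conv)
  ultimately show ?thesis by simp
qed

lemma phi_prefix_ge:
  assumes "6 \<le> phi (Hs 1)" "\<forall>i\<in>{2..j}. 3 \<le> phi (Hs i)" "1 \<le> j" "j \<le> k"
  shows "6 \<le> phi (prefix j)"
  using assms(3,4,2)
proof (induction j rule: nat_induct_at_least)
  case base
  then show ?case using assms(1) by simp
next
  case (Suc j)
  then have "6 \<le> phi (prefix j)" "3 \<le> phi (Hs (Suc j))" by auto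
  then show ?case using phi_prefix_Suc[of j] Suc.hyps Suc.prems(1) by linarith
qed

lemma phi_chain_ge:
  assumes "2 \<le> k" "6 \<le> phi (Hs 1)" "\<forall>i\<in>{2..k-1}. 3 \<le> phi (Hs i)" "6 \<le> phi (Hs k)"
  shows "9 \<le> phi (prefix k)"
proof -
  have "6 \<le> phi (prefix (k - 1))" using phi_prefix_ge[of "k - 1"] assms by simp
  moreover have "phi (prefix (k - 1)) + phi (Hs k) - 3 \<le> phi (prefix k)"
    using phi_prefix_Suc[of "k - 1"] assms(1) by (simp add: Suc_diff_le)
  ultimately show ?thesis using assms(4) by simp
qed

end

text \<open>The first alternative comes from a piece with at least T edges, the second from the
  whole chain when it has at most J pieces, the third from its first J pieces.\<close>

lemma bad_chain_subgraph:
  assumes bad: "bad_chain E" and E: "E \<subseteq> all_edges n" and J: "1 \<le> J"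
  obtains F where "F \<subseteq> E" "card F \<le> J * T + T + 6"
    "(T \<le> card F \<and> 0 \<le> phi F) \<or> 9 \<le> phi F \<or> (6 * J \<le> card F \<and> 6 \<le> phi F)"
proof -
  obtain k Hs where k: "k \<ge> 2"
    and tiled: "\<forall>i\<in>{1..k}. Hs i \<subseteq> E \<and> K4_tiled (Hs i)"
    and disj: "\<forall>i\<in>{1..k}. \<forall>j\<in>{1..k}. i \<noteq> j \<longrightarrow> Hs i \<inter> Hs j = {}"
    and one: "\<forall>i\<in>{1..k-1}. card (verts (Hs i) \<inter> verts (Hs (Suc i))) = 1"
    and phi_first: "phi (Hs 1) \<ge> 6" and phi_last: "phi (Hs k) \<ge> 6"
    and phi_mid: "\<forall>i\<in>{2..k-1}. phi (Hs i) \<ge> 3"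
    using bad unfolding bad_chain_def by blast
  have graphs: "\<And>i. i \<in> {1..k} \<Longrightarrow> Hs i \<subseteq> all_edges n" using tiled E by blast
  show thesis
  proof (cases "\<exists>i\<in>{1..k}. T \<le> card (Hs i)")
    case True
    then obtain i where i: "i \<in> {1..k}" "T \<le> card (Hs i)" by blast
    obtain F where "F \<subseteq> Hs i" "0 \<le> phi F" "min T (card (Hs i)) \<le> card F" "card F \<le> T + 6"
      using K4_tiled_phi_nonneg_subgraph[OF graphs[OF i(1)]] tiled i(1) by blast
    then show thesis using that[of F] i tiled by fastforce
  next
    case False
    then have short: "\<And>i. i \<in> {1..k} \<Longrightarrow> card (Hs i) \<le> T" by (meson nat_le_linear)
    interpret linked_chain n k Hs
    proof
      show "\<And>i. i \<in> {1..k} \<Longrightarrow> Hs i \<subseteq> all_edges n" by (rule graphs)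
      show "\<And>i j. i \<in> {1..k} \<Longrightarrow> j \<in> {1..k} \<Longrightarrow> i \<noteq> j \<Longrightarrow> Hs i \<inter> Hs j = {}"
        using disj by blast
      show "\<And>i. i \<in> {1..k-1} \<Longrightarrow> verts (Hs i) \<inter> verts (Hs (Suc i)) \<noteq> {}"
        using one by (metis card.empty zero_neq_one)
    qed
    have size: "j * 6 \<le> card (prefix j) \<and> card (prefix j) \<le> j * T" if "j \<le> k" for j
      using card_K4_tiled_ge[OF graphs] tiled short that by (intro card_prefix_bounds) auto
    have "\<And>i. i \<in> {1..k} \<Longrightarrow> Hs i \<subseteq> E" using tiled by blast
    note prefix_subset_E = prefix_subset[OF this]
    show thesis
    proof (cases "k \<le> J")
      case True
      have "card (prefix k) \<le> J * T"
        using size[of k] True by (meson le_refl mult_le_mono1 order_trans)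
      then show thesis using that[of "prefix k"] prefix_subset_E[of k]
          phi_chain_ge[OF k phi_first phi_mid phi_last] by simp
    next
      case False
      then have "\<forall>i\<in>{2..J}. 3 \<le> phi (Hs i)" using phi_mid by auto
      then have "6 \<le> phi (prefix J)" using phi_prefix_ge[of J] phi_first J False by simp
      then show thesis using that[of "prefix J"] size[of J] prefix_subset_E[of J] False by simp
    qed
  qed
qed

section \<open>Subgraph probabilities in G(n,p)\<close>

lemma gnp_prob_nonneg: "0 \<le> p \<Longrightarrow> p \<le> 1 \<Longrightarrow> 0 \<le> gnp_prob n p P"
  unfolding gnp_prob_def by (intro sum_nonneg) auto

lemma gnp_prob_le_sum_contains:
  assumes p: "0 \<le> p" "p \<le> 1" and W: "finite W"
    and cover: "\<And>E. E \<subseteq> all_edges n \<Longrightarrow> P E \<Longrightarrow> \<exists>F\<in>W. F \<subseteq> E"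
  shows "gnp_prob n p P \<le> (\<Sum>F\<in>W. gnp_prob n p (\<lambda>E. F \<subseteq> E))"
proof -
  let ?w = "\<lambda>E. p ^ card E * (1 - p) ^ (card (all_edges n) - card E)"
  have "gnp_prob n p P \<le> (\<Sum>E\<in>Pow (all_edges n). \<Sum>F\<in>W. if F \<subseteq> E then ?w E else 0)"
    unfolding gnp_prob_def
  proof (rule sum_mono)
    fix E assume E: "E \<in> Pow (all_edges n)"
    have terms: "\<And>F. 0 \<le> (if F \<subseteq> E then ?w E else 0)" using p by simp
    show "(if P E then ?w E else 0) \<le> (\<Sum>F\<in>W. if F \<subseteq> E then ?w E else 0)"
    proof (cases "P E")
      case True
      then obtain F where F: "F \<in> W" "F \<subseteq> E" using cover E by blast
      have "(if F \<subseteq> E then ?w E else 0) \<le> (\<Sum>F\<in>W. if F \<subseteq> E then ?w E else 0)"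
        using F(1) terms W by (rule member_le_sum)
      then show ?thesis using True F(2) by simp
    qed (simp add: terms sum_nonneg)
  qed
  also have "\<dots> = (\<Sum>F\<in>W. gnp_prob n p (\<lambda>E. F \<subseteq> E))"
    unfolding gnp_prob_def by (rule sum.swap)
  finally show ?thesis .
qed

lemma gnp_prob_contains:
  assumes F: "F \<subseteq> all_edges n"
  shows "gnp_prob n p (\<lambda>E. F \<subseteq> E) = p ^ card F"
proof -
  let ?A = "all_edges n" and ?B = "all_edges n - F"
  have finA: "finite ?A" by (rule finite_all_edges)
  have finF: "finite F" using F finA by (rule finite_subset)
  have finB: "finite ?B" using finA by simp
  have cardA: "card ?A = card F + card ?B" using F finA by (metis card_Diff_subset card_mono finF le_add_diff_inverse)
  have supergraphs: "{E \<in> Pow ?A. F \<subseteq> E} = (\<lambda>G. F \<union> G) ` Pow ?B"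
  proof
    show "{E \<in> Pow ?A. F \<subseteq> E} \<subseteq> (\<lambda>G. F \<union> G) ` Pow ?B"
    proof
      fix E assume "E \<in> {E \<in> Pow ?A. F \<subseteq> E}"
      then have "E = F \<union> (E - F)" "E - F \<in> Pow ?B" by auto
      then show "E \<in> (\<lambda>G. F \<union> G) ` Pow ?B" by blast
    qed
  qed (use F in auto)
  have weight: "p ^ card (F \<union> G) * (1 - p) ^ (card ?A - card (F \<union> G))
      = p ^ card F * ((\<Prod>_\<in>G. p) * (\<Prod>_\<in>?B - G. 1 - p))" if "G \<in> Pow ?B" for G
  proof -
    have G: "finite G" "G \<subseteq> ?B" using that finB finite_subset by auto
    then have "card (F \<union> G) = card F + card G" using finF by (intro card_Un_disjoint) auto
    moreover have "card (?B - G) = card ?B - card G" using G by (rule card_Diff_subset)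
    moreover have "card G \<le> card ?B" using finB G(2) by (rule card_mono)
    ultimately show ?thesis using cardA by (simp add: power_add)
  qed
  have "gnp_prob n p (\<lambda>E. F \<subseteq> E) = (\<Sum>E\<in>{E \<in> Pow ?A. F \<subseteq> E}. p ^ card E * (1 - p) ^ (card ?A - card E))"
    unfolding gnp_prob_def by (rule sum.inter_filter[symmetric]) (simp add: finA)
  also have "\<dots> = (\<Sum>G\<in>Pow ?B. p ^ card (F \<union> G) * (1 - p) ^ (card ?A - card (F \<union> G)))"
    unfolding supergraphs by (rule sum.reindex_cong[of "\<lambda>G. F \<union> G"]) (auto intro: inj_onI)
  also have "\<dots> = p ^ card F * (\<Sum>G\<in>Pow ?B. (\<Prod>_\<in>G. p) * (\<Prod>_\<in>?B - G. 1 - p))"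
    by (simp add: weight sum_distrib_left)
  also have "(\<Sum>G\<in>Pow ?B. (\<Prod>_\<in>G. p) * (\<Prod>_\<in>?B - G. 1 - p)) = (\<Prod>_\<in>?B. p + (1 - p))"
    by (rule prod_add[OF finB, symmetric])
  finally show ?thesis by simp
qed

lemma card_graphs_with_verts:
  assumes "finite V" shows "card {F \<in> W. verts F = V} \<le> 2 ^ 2 ^ card V"
proof -
  have "{F \<in> W. verts F = V} \<subseteq> Pow (Pow V)" unfolding verts_def by blast
  then have "card {F \<in> W. verts F = V} \<le> card (Pow (Pow V))"
    using assms by (intro card_mono) auto
  then show ?thesis using assms by (simp add: card_Pow)
qed

lemma sum_inverse_power_card_le:
  assumes "1 \<le> n"
  shows "(\<Sum>V\<in>{V. V \<subseteq> {0..<n} \<and> card V \<le> M}. inverse (real n ^ card V)) \<le> real M + 1"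
proof -
  let ?VV = "{V. V \<subseteq> {0..<n} \<and> card V \<le> M}"
  have "finite ?VV" by (rule finite_subset[of _ "Pow {0..<n}"]) auto
  then have "(\<Sum>V\<in>?VV. inverse (real n ^ card V))
      = (\<Sum>v\<le>M. \<Sum>V\<in>{V \<in> ?VV. card V = v}. inverse (real n ^ card V))"
    by (intro sum.group[symmetric]) auto
  also have "\<dots> \<le> (\<Sum>v\<le>M. 1)"
  proof (rule sum_mono)
    fix v assume "v \<in> {..M}"
    then have "{V \<in> ?VV. card V = v} = {V. V \<subseteq> {0..<n} \<and> card V = v}" by auto
    then have "card {V \<in> ?VV. card V = v} = n choose v" by (simp add: n_subsets)
    also have "\<dots> \<le> n ^ v" by (cases "v \<le> n") (simp_all add: binomial_le_pow binomial_eq_0)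
    finally have "real (card {V \<in> ?VV. card V = v}) \<le> real (n ^ v)" by (simp only: of_nat_le_iff)
    then show "(\<Sum>V\<in>{V \<in> ?VV. card V = v}. inverse (real n ^ card V)) \<le> 1"
      using assms by (simp add: field_simps)
  qed
  finally show ?thesis by simp
qed

lemma sum_inverse_power_card_verts_le:
  assumes "1 \<le> n" and W: "W \<subseteq> {F. F \<subseteq> all_edges n \<and> card (verts F) \<le> M}"
  shows "(\<Sum>F\<in>W. inverse (real n ^ card (verts F))) \<le> 2 ^ 2 ^ M * (real M + 1)"
proof -
  let ?VV = "{V. V \<subseteq> {0..<n} \<and> card V \<le> M}"
  have finW: "finite W"
    by (rule finite_subset[of _ "Pow (all_edges n)"]) (use W finite_all_edges in auto)
  have "(\<Sum>F\<in>W. inverse (real n ^ card (verts F)))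
      = (\<Sum>V\<in>verts ` W. \<Sum>F\<in>{F \<in> W. verts F = V}. inverse (real n ^ card (verts F)))"
    by (rule sum.image_gen[OF finW])
  also have "\<dots> = (\<Sum>V\<in>verts ` W. real (card {F \<in> W. verts F = V}) * inverse (real n ^ card V))"
  proof (rule sum.cong[OF refl])
    fix V
    have "(\<Sum>F\<in>{F \<in> W. verts F = V}. inverse (real n ^ card (verts F)))
        = (\<Sum>F\<in>{F \<in> W. verts F = V}. inverse (real n ^ card V))" by (rule sum.cong) auto
    then show "(\<Sum>F\<in>{F \<in> W. verts F = V}. inverse (real n ^ card (verts F)))
        = real (card {F \<in> W. verts F = V}) * inverse (real n ^ card V)" by simp
  qed
  also have "\<dots> \<le> (\<Sum>V\<in>verts ` W. 2 ^ 2 ^ M * inverse (real n ^ card V))"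
  proof (rule sum_mono)
    fix V assume "V \<in> verts ` W"
    then have V: "finite V" "card V \<le> M" using W finite_verts by auto
    have "card {F \<in> W. verts F = V} \<le> 2 ^ 2 ^ card V" using V(1) by (rule card_graphs_with_verts)
    also have "(2::nat) ^ 2 ^ card V \<le> 2 ^ 2 ^ M" using V(2) by (intro power_increasing) simp_all
    finally have "real (card {F \<in> W. verts F = V}) \<le> real ((2::nat) ^ 2 ^ M)"
      by (simp only: of_nat_le_iff)
    then show "real (card {F \<in> W. verts F = V}) * inverse (real n ^ card V)
        \<le> 2 ^ 2 ^ M * inverse (real n ^ card V)"
      by (intro mult_right_mono) simp_all
  qed
  also have "\<dots> \<le> (\<Sum>V\<in>?VV. 2 ^ 2 ^ M * inverse (real n ^ card V))"
  proof (rule sum_mono2)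
    show "finite ?VV" by (rule finite_subset[of _ "Pow {0..<n}"]) auto
    show "verts ` W \<subseteq> ?VV" using W verts_subset_atLeastLessThan by blast
  qed simp
  also have "\<dots> \<le> 2 ^ 2 ^ M * (real M + 1)"
    using sum_inverse_power_card_le[OF assms(1)] by (simp add: sum_distrib_left[symmetric])
  finally show ?thesis .
qed

lemma powr_minus_le_one:
  fixes x :: real assumes "1 \<le> x" "0 \<le> a" shows "x powr - a \<le> 1"
proof -
  have "1 \<le> x powr a" using assms by (rule ge_one_powr_ge_zero)
  then show ?thesis by (simp add: powr_minus inverse_le_1_iff)
qed

lemma gnp_prob_le_first_moment:
  assumes n: "1 \<le> n" and a: "0 \<le> a"
    and dense: "\<And>E. E \<subseteq> all_edges n \<Longrightarrow> P E \<Longrightarrow>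
      \<exists>F\<subseteq>E. card (verts F) \<le> M \<and> real (card (verts F)) + \<delta> \<le> a * real (card F)"
  shows "gnp_prob n (real n powr - a) P \<le> 2 ^ 2 ^ M * (real M + 1) * real n powr - \<delta>"
proof -
  define p where "p = real n powr - a"
  define W where "W = {F. F \<subseteq> all_edges n \<and> card (verts F) \<le> M
      \<and> real (card (verts F)) + \<delta> \<le> a * real (card F)}"
  have p: "0 \<le> p" "p \<le> 1" unfolding p_def using n a powr_minus_le_one by auto
  have "W \<subseteq> Pow (all_edges n)" unfolding W_def by blast
  then have finW: "finite W" using finite_all_edges by (simp add: finite_subset)
  have "gnp_prob n p P \<le> (\<Sum>F\<in>W. gnp_prob n p (\<lambda>E. F \<subseteq> E))"
  proof (rule gnp_prob_le_sum_contains[OF p finW])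
    fix E assume E: "E \<subseteq> all_edges n" "P E"
    then obtain F where F: "F \<subseteq> E" "card (verts F) \<le> M"
      "real (card (verts F)) + \<delta> \<le> a * real (card F)" using dense by blast
    moreover have "F \<subseteq> all_edges n" using F(1) E(1) by (rule order_trans)
    ultimately show "\<exists>F\<in>W. F \<subseteq> E" unfolding W_def by blast
  qed
  also have "\<dots> = (\<Sum>F\<in>W. p ^ card F)"
    by (intro sum.cong refl gnp_prob_contains) (simp add: W_def)
  also have "\<dots> \<le> (\<Sum>F\<in>W. real n powr - \<delta> * inverse (real n ^ card (verts F)))"
  proof (rule sum_mono)
    fix F assume "F \<in> W"
    then have F: "real (card (verts F)) + \<delta> \<le> a * real (card F)" unfolding W_def by blast
    have "p ^ card F = (real n powr - a) powr real (card F)"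
      unfolding p_def using n by (simp add: powr_realpow)
    also have "\<dots> = real n powr (- a * real (card F))" by (simp add: powr_powr)
    also have "\<dots> \<le> real n powr (- \<delta> + - real (card (verts F)))"
      using n F by (intro powr_mono) auto
    also have "\<dots> = real n powr - \<delta> * real n powr - real (card (verts F))" by (rule powr_add)
    also have "real n powr - real (card (verts F)) = inverse (real n ^ card (verts F))"
      using n by (simp add: powr_minus powr_realpow)
    finally show "p ^ card F \<le> real n powr - \<delta> * inverse (real n ^ card (verts F))" .
  qed
  also have "\<dots> = real n powr - \<delta> * (\<Sum>F\<in>W. inverse (real n ^ card (verts F)))"
    by (simp add: sum_distrib_left)
  also have "\<dots> \<le> real n powr - \<delta> * (2 ^ 2 ^ M * (real M + 1))"
    by (intro mult_left_mono sum_inverse_power_card_verts_le[OF n]) (auto simp: W_def)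
  finally show ?thesis unfolding p_def by (simp add: mult.commute)
qed

text \<open>The density condition of the first moment method with \<delta> = 1/5 and a = 2/5 + \<epsilon> reads
  9 \<le> phi F + 5 \<epsilon> e(F); choosing T \<ge> 2/\<epsilon> and J \<ge> 1/\<epsilon> makes each alternative of
  the combinatorial lemma satisfy it.\<close>

lemma bad_chain_dense_subgraph:
  fixes \<epsilon> :: real
  assumes "0 < \<epsilon>"
  obtains M where "\<And>n E. E \<subseteq> all_edges n \<Longrightarrow> bad_chain E \<Longrightarrow>
    \<exists>F\<subseteq>E. card (verts F) \<le> M \<and> real (card (verts F)) + 1/5 \<le> (2/5 + \<epsilon>) * real (card F)"
proof
  define T where "T = nat \<lceil>2 / \<epsilon>\<rceil>"
  define J where "J = nat \<lceil>1 / \<epsilon>\<rceil>"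
  have "2 / \<epsilon> \<le> real T" "1 / \<epsilon> \<le> real J"
    unfolding T_def J_def by (rule real_nat_ceiling_ge)+
  then have T: "2 \<le> \<epsilon> * real T" and J: "1 \<le> \<epsilon> * real J"
    using assms by (simp_all add: field_simps)
  have "1 \<le> J" using J by (cases J) auto
  have scale: "\<epsilon> * real a \<le> \<epsilon> * real b" if "a \<le> b" for a b
    using that assms by (intro mult_left_mono) simp_all
  fix n E assume E: "E \<subseteq> all_edges n" "bad_chain E"
  obtain F where F: "F \<subseteq> E" "card F \<le> J * T + T + 6"
    and alternatives: "(T \<le> card F \<and> 0 \<le> phi F) \<or> 9 \<le> phi F \<or> (6 * J \<le> card F \<and> 6 \<le> phi F)"
    using bad_chain_subgraph[OF E(2,1) \<open>1 \<le> J\<close>] .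
  have "card (verts F) \<le> 2 * (J * T + T + 6)"
    using card_verts_le[OF order_trans[OF F(1) E(1)]] F(2) by simp
  moreover have "9 \<le> real_of_int (phi F) + 5 * \<epsilon> * real (card F)"
    using alternatives
  proof (elim disjE conjE)
    assume "T \<le> card F" "0 \<le> phi F"
    then show ?thesis using T scale[of T "card F"] by linarith
  next
    assume "9 \<le> phi F"
    then show ?thesis using scale[of 0 "card F"] by linarith
  next
    assume "6 * J \<le> card F" "6 \<le> phi F"
    then show ?thesis using J scale[of "6 * J" "card F"] by simp
  qed
  then have "real (card (verts F)) + 1/5 \<le> (2/5 + \<epsilon>) * real (card F)"
    unfolding phi_def by (simp add: algebra_simps)
  ultimately show "\<exists>F\<subseteq>E. card (verts F) \<le> 2 * (J * T + T + 6)
      \<and> real (card (verts F)) + 1/5 \<le> (2/5 + \<epsilon>) * real (card F)"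
    using F(1) by blast
qed

theorem claim7p9:
  shows "\<exists>\<epsilon>0>0. \<forall>\<epsilon>::real. 0 < \<epsilon> \<and> \<epsilon> < \<epsilon>0 \<longrightarrow>
     (\<lambda>n. gnp_prob n (real n powr (-(2/5 + \<epsilon>))) bad_chain) \<longlonglongrightarrow> 0"
proof (intro exI[of _ 1] conjI allI impI)
  fix \<epsilon> :: real assume "0 < \<epsilon> \<and> \<epsilon> < 1"
  then have \<epsilon>: "0 < \<epsilon>" by simp
  obtain M where dense: "\<And>n E. E \<subseteq> all_edges n \<Longrightarrow> bad_chain E \<Longrightarrow>
      \<exists>F\<subseteq>E. card (verts F) \<le> M \<and> real (card (verts F)) + 1/5 \<le> (2/5 + \<epsilon>) * real (card F)"
    using bad_chain_dense_subgraph[OF \<epsilon>] by blast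
  define C :: real where "C = 2 ^ 2 ^ M * (real M + 1)"
  have bounds: "0 \<le> gnp_prob n (real n powr (-(2/5 + \<epsilon>))) bad_chain
      \<and> gnp_prob n (real n powr (-(2/5 + \<epsilon>))) bad_chain \<le> C * real n powr (- (1/5))"
    if "1 \<le> n" for n
  proof
    have "real n powr (-(2/5 + \<epsilon>)) \<le> 1" using that \<epsilon> by (intro powr_minus_le_one) simp_all
    then show "0 \<le> gnp_prob n (real n powr (-(2/5 + \<epsilon>))) bad_chain"
      by (intro gnp_prob_nonneg) simp_all
    show "gnp_prob n (real n powr (-(2/5 + \<epsilon>))) bad_chain \<le> C * real n powr (- (1/5))"
      unfolding C_def by (rule gnp_prob_le_first_moment) (use that \<epsilon> dense in auto)
  qed
  have lim: "(\<lambda>n. C * real n powr (- (1/5))) \<longlonglongrightarrow> 0"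
    by (intro tendsto_mult_right_zero tendsto_neg_powr filterlim_real_sequentially) simp
  show "(\<lambda>n. gnp_prob n (real n powr (-(2/5 + \<epsilon>))) bad_chain) \<longlonglongrightarrow> 0"
  proof (rule tendsto_sandwich[OF _ _ tendsto_const lim])
    show "\<forall>\<^sub>F n in sequentially. 0 \<le> gnp_prob n (real n powr (-(2/5 + \<epsilon>))) bad_chain"
      using bounds by (intro eventually_sequentiallyI[of 1]) blast
    show "\<forall>\<^sub>F n in sequentially.
        gnp_prob n (real n powr (-(2/5 + \<epsilon>))) bad_chain \<le> C * real n powr (- (1/5))"
      using bounds by (intro eventually_sequentiallyI[of 1]) blast
  qed
qed simp

end
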